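(* For every integer $a\geq 2$, $$\sigma(2a-1,2)=-a\,2^{2a-1}\lambda(2a+1)+\frac{2^{2a-1}(2a+1)}{3}\lambda(2)\lambda(2a-1)+\sum_{j=1}^{a-2}j\,2^{2j}\lambda(2j+1)\zeta(2a-2j),$$ where an empty sum equals $0$.
   Context: For integers $t\geq 1$ and $n\geq 1$ let $S_n^{(t)}=\sum_{k=1}^{n}\frac{1}{(2k-1)^t}$, and for integers $s\geq 2$, $t\geq 1$ let $\sigma(s,t)=\sum_{n\geq 1}\frac{S_n^{(t)}}{n^s}$. For real $s>1$, $\lambda(s)=\sum_{n\geq 1}\frac{1}{(2n-1)^s}=(1-2^{-s})\zeta(s)$, and $\zeta$ is the Riemann zeta function. *)

theory Defs
  imports "HOL-Analysis.Analysis"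
begin

definition zeta :: "real \<Rightarrow> real" where
  "zeta s = (\<Sum>n. 1 / (real (Suc n)) powr s)"

text \<open>lambda(s) = sum over odd n of n^(-s) = (1 - 2^(-s)) zeta(s).\<close>
definition dlambda :: "real \<Rightarrow> real" where
  "dlambda s = (\<Sum>n. 1 / (2 * real n + 1) powr s)"

definition S_odd :: "nat \<Rightarrow> nat \<Rightarrow> real" where
  "S_odd t n = (\<Sum>k=1..n. 1 / (2 * real k - 1) ^ t)"

definition sigma :: "nat \<Rightarrow> nat \<Rightarrow> real" where
  "sigma s t = (\<Sum>n. S_odd t (Suc n) / real (Suc n) ^ s)"

end

theory Submission
  imports Defs
begin

text \<open>
  For n \<ge> 1 and odd p = 2m+1 the shifted odd squares sum to
  sum_m 1/(p-2n)^2 = lambda(2) + S_n and sum_m 1/(p+2n)^2 = lambda(2) - S_n, with S_n = S_n^(2).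
  Hence 2 sigma(s,2) is the double sum over m and n of the kernel
  1/((p-2n)^2 n^s) - 1/((p+2n)^2 n^s), and since both parts have nonnegative terms the
  order of summation may be exchanged. For s = 2b+1, partial fractions in n express the
  kernel through the powers n^(-2k), which sum to zeta values, the squares 1/(2n+p)^2 and
  1/(2n-p)^2, which together sum to 2 lambda(2) - 1/p^2, and the differences
  1/(2n+p) - 1/(2n-p), which telescope to -1/p. Summing over odd p then yields lambda values,
  and zeta(2) = 4 lambda(2)/3 gives the stated form.
\<close>

lemma sums_swap_nonneg:
  fixes h :: "nat \<Rightarrow> nat \<Rightarrow> real"
  assumes nonneg: "\<And>n m. 0 \<le> h n m" and rows: "\<And>n. h n sums r n" and "summable r"
  shows "summable (\<lambda>n. h n m)" and "(\<lambda>m. \<Sum>n. h n m) sums suminf r"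
proof -
  have rows_has_sum: "(h n has_sum r n) UNIV" for n
    using sums_nonneg_imp_has_sum[OF rows] nonneg by auto
  have "0 \<le> r n" for n
    using rows[of n] nonneg by (metis sums_unique suminf_nonneg sums_summable)
  then have r_has_sum: "(r has_sum suminf r) UNIV"
    using sums_nonneg_imp_has_sum \<open>summable r\<close> summable_sums by blast
  have "(\<lambda>(n,m). h n m) summable_on UNIV \<times> UNIV"
    by (rule summable_on_SigmaI[where g=r])
      (use rows_has_sum r_has_sum nonneg in \<open>auto simp: summable_on_def\<close>)
  then have "((\<lambda>(n,m). h n m) has_sum suminf r) (UNIV \<times> UNIV)"
    by (intro has_sum_SigmaI[where g=r]) (use rows_has_sum r_has_sum in auto)
  then have swapped: "((\<lambda>(m,n). h n m) has_sum suminf r) (UNIV \<times> UNIV)"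
    using has_sum_swap[where f="\<lambda>(n,m). h n m" and A=UNIV and B=UNIV]
    by (simp add: case_prod_unfold)
  have columns: "(\<lambda>n. h n m) summable_on UNIV" for m
    using summable_on_SigmaD1[of "\<lambda>m n. h n m" UNIV "\<lambda>_. UNIV" m] swapped
    by (auto simp: summable_on_def)
  then show "summable (\<lambda>n. h n m)" for m
    by (rule summable_on_imp_summable)
  have "((\<lambda>n. h n m) has_sum (\<Sum>n. h n m)) UNIV" for m
    using columns[of m] has_sum_imp_sums sums_unique
    by (metis summable_iff_has_sum_infsum)
  then have "((\<lambda>m. \<Sum>n. h n m) has_sum suminf r) UNIV"
    by (intro has_sum_SigmaD[OF swapped[unfolded Sigma_def[symmetric]]]) auto
  then show "(\<lambda>m. \<Sum>n. h n m) sums suminf r"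
    by (rule has_sum_imp_sums)
qed

lemma telescope_sums_lag:
  fixes u :: "nat \<Rightarrow> 'a::real_normed_vector"
  assumes "u \<longlonglongrightarrow> 0"
  shows "(\<lambda>n. u (n + K) - u n) sums - (\<Sum>i<K. u i)"
proof -
  define v where "v n = (\<Sum>i<K. u (n + i))" for n
  have "v (Suc n) - v n = u (n + K) - u n" for n
  proof -
    have "v n + u (n + K) = u n + v (Suc n)"
      using sum.lessThan_Suc_shift[of "\<lambda>i. u (n + i)" K] by (simp add: v_def)
    then show ?thesis
      by (simp add: algebra_simps eq_diff_eq diff_eq_eq)
  qed
  moreover have "v \<longlonglongrightarrow> (\<Sum>i<K. 0)"
    unfolding v_def by (intro tendsto_sum LIMSEQ_ignore_initial_segment[OF assms])
  ultimately show ?thesis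
    using telescope_sums[of v 0] by (simp add: v_def)
qed

lemma summable_inverse_Suc_power: "2 \<le> k \<Longrightarrow> summable (\<lambda>n. 1 / real (Suc n) ^ k)"
  using inverse_power_summable[of k, where 'a=real]
    summable_Suc_iff[of "\<lambda>n. inverse (real n ^ k)"]
  by (simp add: divide_inverse)

lemma zeta_sums: "2 \<le> k \<Longrightarrow> (\<lambda>n. 1 / real (Suc n) ^ k) sums zeta (real k)"
  using summable_sums[OF summable_inverse_Suc_power] unfolding zeta_def
  by (simp add: powr_realpow)

lemma summable_inverse_odd_power: "2 \<le> k \<Longrightarrow> summable (\<lambda>m. 1 / (2 * real m + 1) ^ k)"
proof (rule summable_comparison_test'[OF summable_inverse_Suc_power])
  fix n :: nat
  have "real (Suc n) ^ k \<le> (2 * real n + 1) ^ k"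
    by (intro power_mono) auto
  then show "norm (1 / (2 * real n + 1) ^ k) \<le> 1 / real (Suc n) ^ k"
    by (simp add: frac_le)
qed

lemma dlambda_sums: "2 \<le> k \<Longrightarrow> (\<lambda>m. 1 / (2 * real m + 1) ^ k) sums dlambda (real k)"
  unfolding dlambda_def
  by (simp add: powr_realpow add_pos_nonneg summable_sums summable_inverse_odd_power)

lemma dlambda_eq_zeta:
  assumes "2 \<le> k"
  shows "dlambda (real k) = (1 - 1 / 2 ^ k) * zeta (real k)"
proof -
  let ?f = "\<lambda>n. 1 / real (Suc n) ^ k"
  have "(\<lambda>n. sum ?f {n * 2..<n * 2 + 2}) sums zeta (real k)"
    using sums_group[OF zeta_sums[OF assms], of 2] by simp
  moreover have "sum ?f {n * 2..<n * 2 + 2} = 1 / (2 * real n + 1) ^ k + 1 / 2 ^ k * ?f n" for n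
  proof -
    have "{n * 2..<n * 2 + 2} = {n * 2, n * 2 + 1}" by auto
    then show ?thesis
      by (simp add: power_mult_distrib[symmetric] mult_ac add_ac)
  qed
  ultimately have "(\<lambda>n. 1 / (2 * real n + 1) ^ k + 1 / 2 ^ k * ?f n) sums zeta (real k)"
    by simp
  moreover have "(\<lambda>n. 1 / (2 * real n + 1) ^ k + 1 / 2 ^ k * ?f n)
      sums (dlambda (real k) + 1 / 2 ^ k * zeta (real k))"
    by (intro sums_add sums_mult dlambda_sums zeta_sums assms)
  ultimately have "zeta (real k) = dlambda (real k) + 1 / 2 ^ k * zeta (real k)"
    using sums_unique2 by blast
  then show ?thesis
    by (simp add: algebra_simps)
qed

lemma S_odd_eq_sum_lessThan: "S_odd t n = (\<Sum>i<n. 1 / (2 * real i + 1) ^ t)"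
  unfolding S_odd_def by (induction n) (auto simp: algebra_simps)

lemma S_odd_bounds:
  assumes "2 \<le> t"
  shows "0 \<le> S_odd t n" and "S_odd t n \<le> dlambda (real t)"
proof -
  show "0 \<le> S_odd t n"
    unfolding S_odd_eq_sum_lessThan by (intro sum_nonneg) simp
  show "S_odd t n \<le> dlambda (real t)"
    unfolding S_odd_eq_sum_lessThan sums_unique[OF dlambda_sums[OF assms]]
    by (intro sum_le_suminf summable_inverse_odd_power assms) auto
qed

lemma dlambda_shift_up_sums:
  assumes "2 \<le> k"
  shows "(\<lambda>m. 1 / (2 * real m + 1 + 2 * real n) ^ k) sums (dlambda (real k) - S_odd k n)"
proof -
  let ?f = "\<lambda>m. 1 / (2 * real m + 1) ^ k"
  have "?f sums ((dlambda (real k) - S_odd k n) + (\<Sum>i<n. ?f i))"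
    using dlambda_sums[OF assms] by (simp add: S_odd_eq_sum_lessThan)
  then have "(\<lambda>i. ?f (i + n)) sums (dlambda (real k) - S_odd k n)"
    by (subst sums_iff_shift)
  then show ?thesis
    by (simp add: algebra_simps)
qed

lemma dlambda_shift_down_sums:
  assumes "1 \<le> k"
  shows "(\<lambda>m. 1 / (2 * real m + 1 - 2 * real n) ^ (2 * k)) sums (dlambda (real (2 * k)) + S_odd (2 * k) n)"
proof -
  let ?f = "\<lambda>m. 1 / (2 * real m + 1 - 2 * real n) ^ (2 * k)"
  let ?g = "\<lambda>m. 1 / (2 * real m + 1) ^ (2 * k)"
  have "(\<lambda>i. ?f (i + n)) = ?g"
    by (simp add: algebra_simps)
  then have "?f sums (dlambda (real (2 * k)) + (\<Sum>i<n. ?f i))"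
    using dlambda_sums[of "2 * k"] assms by (simp add: sums_iff_shift[symmetric])
  moreover have "(\<Sum>i<n. ?f i) = (\<Sum>i<n. ?g (n - Suc i))"
  proof (rule sum.cong)
    fix i assume "i \<in> {..<n}"
    then have "2 * real i + 1 - 2 * real n = - (2 * real (n - Suc i) + 1)"
      by (simp add: of_nat_diff)
    then show "?f i = ?g (n - Suc i)"
      by (simp only: Power.power_minus_even)
  qed simp
  moreover have "(\<Sum>i<n. ?g (n - Suc i)) = S_odd (2 * k) n"
    unfolding S_odd_eq_sum_lessThan by (rule sum.nat_diff_reindex)
  ultimately show ?thesis
    by simp
qed

lemma sum_reciprocals_centered_odd:
  "(\<Sum>t<2 * m + 1. 1 / (2 * real t + 1 - 2 * real m)) = 1 / (2 * real m + 1)"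
proof -
  let ?g = "\<lambda>t. 1 / (2 * real t + 1 - 2 * real m)"
  let ?A = "\<Sum>t<2 * m + 1. ?g t"
  have "?A = (\<Sum>t<2 * m + 1. ?g (2 * m + 1 - Suc t))"
    by (rule sum.nat_diff_reindex[symmetric])
  also have "\<dots> = (\<Sum>t<2 * m + 1. 1 / (2 * real m + 1 - 2 * real t))"
  proof (rule sum.cong)
    fix t assume "t \<in> {..<2 * m + 1}"
    then have "real (2 * m + 1 - Suc t) = 2 * real m - real t"
      by (simp add: of_nat_diff)
    then show "?g (2 * m + 1 - Suc t) = 1 / (2 * real m + 1 - 2 * real t)"
      by (simp add: algebra_simps)
  qed simp
  also have "\<dots> = 1 / (2 * real m + 1) + (\<Sum>t<2 * m. 1 / (2 * real m + 1 - 2 * real (Suc t)))"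
    unfolding Suc_eq_plus1[symmetric] by (subst sum.lessThan_Suc_shift) simp
  also have "(\<Sum>t<2 * m. 1 / (2 * real m + 1 - 2 * real (Suc t))) = - (\<Sum>t<2 * m. ?g t)"
    by (simp add: sum_negf[symmetric] algebra_simps minus_divide_right)
  also have "(\<Sum>t<2 * m. ?g t) = ?A - ?g (2 * m)"
    by simp
  finally have "?A = 2 / (2 * real m + 1) - ?A"
    by (simp add: algebra_simps)
  then show ?thesis
    by simp
qed

lemma odd_reciprocal_difference_sums:
  fixes m :: nat
  defines "p \<equiv> 2 * real m + 1"
  shows "(\<lambda>n. 1 / (2 * real (Suc n) + p) - 1 / (2 * real (Suc n) - p)) sums (- 1 / p)"
proof -
  define u where "u i = 1 / (2 * real (Suc i) - p)" for i
  have "filterlim (\<lambda>i. (2 - p) + 2 * real i) at_top sequentially"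
    by (intro filterlim_tendsto_add_at_top[OF tendsto_const]
        filterlim_tendsto_pos_mult_at_top[OF tendsto_const _ filterlim_real_sequentially]) simp
  then have "filterlim (\<lambda>i. 2 * real (Suc i) - p) at_top sequentially"
    by (simp add: algebra_simps)
  then have "u \<longlonglongrightarrow> 0"
    unfolding u_def by (rule tendsto_divide_0[OF tendsto_const filterlim_at_top_imp_at_infinity])
  moreover have "(\<Sum>i<2 * m + 1. u i) = 1 / p"
    using sum_reciprocals_centered_odd[of m] unfolding u_def p_def by (simp add: algebra_simps)
  ultimately have "(\<lambda>n. u (n + (2 * m + 1)) - u n) sums - (1 / p)"
    using telescope_sums_lag[of u "2 * m + 1"] by simp
  moreover have "u (n + (2 * m + 1)) - u n = 1 / (2 * real (Suc n) + p) - 1 / (2 * real (Suc n) - p)" for n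
    unfolding u_def p_def by (simp add: algebra_simps)
  ultimately show ?thesis
    by (simp only: minus_divide_left)
qed

lemma partial_fractions_base:
  fixes n p :: real
  assumes "n \<noteq> 0" "p \<noteq> 0" "2 * n + p \<noteq> 0" "2 * n - p \<noteq> 0"
  shows "1 / ((p - 2 * n)^2 * n) - 1 / ((p + 2 * n)^2 * n)
     = 2 / p * (1 / (2 * n + p)^2 + 1 / (2 * n - p)^2 + 1 / p * (1 / (2 * n + p) - 1 / (2 * n - p)))"
  using assms by (simp add: divide_simps power2_eq_square) (simp add: algebra_simps)

lemma partial_fractions_step:
  fixes n p B :: real
  assumes "n \<noteq> 0" "p \<noteq> 0" "2 * n + p \<noteq> 0" "2 * n - p \<noteq> 0"
  shows "(1 / (2 * n + p)^2 + 1 / (2 * n - p)^2 + (2 * B + 1) / p * (1 / (2 * n + p) - 1 / (2 * n - p))) / n^2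
   = 4 * (B + 1) / (p^2 * n^2)
     + 4 / p^2 * (1 / (2 * n + p)^2 + 1 / (2 * n - p)^2 + (2 * B + 3) / p * (1 / (2 * n + p) - 1 / (2 * n - p)))"
  using assms by (simp add: divide_simps power2_eq_square power3_eq_cube) (simp add: algebra_simps)

lemma partial_fractions_odd_power:
  fixes n p :: real
  assumes nz: "n \<noteq> 0" "p \<noteq> 0" "2 * n + p \<noteq> 0" "2 * n - p \<noteq> 0"
  shows "1 / ((p - 2 * n)^2 * n ^ (2 * b + 1)) - 1 / ((p + 2 * n)^2 * n ^ (2 * b + 1))
    = (\<Sum>j=1..b. real j * 2 ^ (2 * j + 1) / (p ^ (2 * j + 1) * n ^ (2 * b + 2 - 2 * j)))
      + 2 ^ (2 * b + 1) / p ^ (2 * b + 1) * (1 / (2 * n + p)^2 + 1 / (2 * n - p)^2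
          + real (2 * b + 1) / p * (1 / (2 * n + p) - 1 / (2 * n - p)))"
proof (induction b)
  case 0
  show ?case
    using partial_fractions_base[OF nz] by simp
next
  case (Suc b)
  let ?Q = "\<lambda>c. 1 / (2 * n + p)^2 + 1 / (2 * n - p)^2 + c / p * (1 / (2 * n + p) - 1 / (2 * n - p))"
  let ?f = "\<lambda>b j. real j * 2 ^ (2 * j + 1) / (p ^ (2 * j + 1) * n ^ (2 * b + 2 - 2 * j))"
  have lhs: "1 / ((p - 2 * n)^2 * n ^ (2 * Suc b + 1)) - 1 / ((p + 2 * n)^2 * n ^ (2 * Suc b + 1))
      = (1 / ((p - 2 * n)^2 * n ^ (2 * b + 1)) - 1 / ((p + 2 * n)^2 * n ^ (2 * b + 1))) / n^2"
    by (simp add: power_add[symmetric] diff_divide_distrib mult.assoc)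
  have shift: "?f (Suc b) j = ?f b j / n^2" if "j \<in> {1..b}" for j
  proof -
    from that have "n ^ (2 * Suc b + 2 - 2 * j) = n ^ (2 * b + 2 - 2 * j) * n^2"
      by (simp flip: power_add add: Suc_diff_le)
    then show ?thesis
      by (simp add: mult.assoc)
  qed
  have "(\<Sum>j=1..b. ?f (Suc b) j) = (\<Sum>j=1..b. ?f b j) / n^2"
    unfolding sum_divide_distrib by (rule sum.cong[OF refl shift])
  then have sum: "(\<Sum>j=1..Suc b. ?f (Suc b) j) = (\<Sum>j=1..b. ?f b j) / n^2 + ?f (Suc b) (Suc b)"
    by (simp only: sum.cl_ivl_Suc) simp
  have "2 ^ (2 * b + 1) / p ^ (2 * b + 1) * ?Q (real (2 * b + 1)) / n^2
     = 2 ^ (2 * b + 1) / p ^ (2 * b + 1) * (4 * (real b + 1) / (p^2 * n^2) + 4 / p^2 * ?Q (2 * real b + 3))"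
  proof -
    have "?Q (real (2 * b + 1)) / n^2 = 4 * (real b + 1) / (p^2 * n^2) + 4 / p^2 * ?Q (2 * real b + 3)"
      using partial_fractions_step[OF nz, of "real b"] by (simp only: of_nat_add of_nat_mult of_nat_numeral of_nat_1)
    then show ?thesis
      by (simp only: times_divide_eq_right[symmetric])
  qed
  also have "\<dots> = ?f (Suc b) (Suc b) + 2 ^ (2 * Suc b + 1) / p ^ (2 * Suc b + 1) * ?Q (real (2 * Suc b + 1))"
    using nz by (simp add: field_simps power_add power2_eq_square)
  finally show ?case
    unfolding lhs Suc.IH sum by (simp add: add_divide_distrib)
qed

definition sigma_kernel :: "nat \<Rightarrow> nat \<Rightarrow> nat \<Rightarrow> real" where
  "sigma_kernel s m n = 1 / ((2 * real m + 1 - 2 * real n)^2 * real n ^ s)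
                      - 1 / ((2 * real m + 1 + 2 * real n)^2 * real n ^ s)"

lemma sigma_kernel_double_sums:
  assumes "2 \<le> s"
  shows "(\<lambda>m. \<Sum>n. sigma_kernel s m (Suc n)) sums (2 * sigma s 2)"
proof -
  let ?N = "\<lambda>n. real (Suc n)"
  define F where "F n m = 1 / ((2 * real m + 1 - 2 * ?N n)^2 * ?N n ^ s)" for n m
  define G where "G n m = 1 / ((2 * real m + 1 + 2 * ?N n)^2 * ?N n ^ s)" for n m
  define t where "t n = S_odd 2 (Suc n) / ?N n ^ s" for n
  have summable_power: "summable (\<lambda>n. 1 / ?N n ^ s)"
    by (rule summable_inverse_Suc_power[OF assms])
  have "summable t"
  proof (rule summable_comparison_test'[OF summable_mult[OF summable_power, of "dlambda 2"]])
    fix n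
    show "norm (t n) \<le> dlambda 2 * (1 / ?N n ^ s)"
      using S_odd_bounds[of 2 "Suc n"] unfolding t_def by (simp add: divide_right_mono)
  qed
  then have sigma: "t sums sigma s 2"
    unfolding sigma_def t_def by (simp add: summable_sums)
  define rF where "rF n = dlambda 2 * (1 / ?N n ^ s) + t n" for n
  define rG where "rG n = dlambda 2 * (1 / ?N n ^ s) - t n" for n
  have "F n sums rF n" for n
    using sums_divide[OF dlambda_shift_down_sums[of 1 "Suc n"], of "?N n ^ s"]
    unfolding F_def rF_def t_def by (simp add: add_divide_distrib)
  moreover have "G n sums rG n" for n
    using sums_divide[OF dlambda_shift_up_sums[of 2 "Suc n"], of "?N n ^ s"]
    unfolding G_def rG_def t_def by (simp add: diff_divide_distrib)
  moreover have "summable rF" "summable rG"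
    unfolding rF_def rG_def
    by (intro summable_add summable_diff summable_mult summable_power \<open>summable t\<close>)+
  moreover have "0 \<le> F n m" "0 \<le> G n m" for n m
    unfolding F_def G_def by simp_all
  ultimately have F_swap: "summable (\<lambda>n. F n m)" "(\<lambda>m. \<Sum>n. F n m) sums suminf rF"
    and G_swap: "summable (\<lambda>n. G n m)" "(\<lambda>m. \<Sum>n. G n m) sums suminf rG" for m
    using sums_swap_nonneg[of F rF] sums_swap_nonneg[of G rG] by blast+
  have "(\<Sum>n. sigma_kernel s m (Suc n)) = (\<Sum>n. F n m) - (\<Sum>n. G n m)" for m
    unfolding sigma_kernel_def using F_swap(1) G_swap(1)
    by (simp add: suminf_diff F_def G_def)
  moreover have "suminf rF - suminf rG = 2 * sigma s 2"
  proof -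
    have "(\<lambda>n. rF n - rG n) sums (suminf rF - suminf rG)"
      by (intro sums_diff summable_sums \<open>summable rF\<close> \<open>summable rG\<close>)
    moreover have "(\<lambda>n. rF n - rG n) sums (2 * sigma s 2)"
      using sums_mult[OF sigma, of 2] by (simp add: rF_def rG_def)
    ultimately show ?thesis
      by (rule sums_unique2)
  qed
  ultimately show ?thesis
    using sums_diff[OF F_swap(2) G_swap(2)] by simp
qed

lemma odd_shift_partial_fraction_sums:
  fixes m :: nat and c :: real
  defines "p \<equiv> 2 * real m + 1"
  shows "(\<lambda>n. 1 / (2 * real (Suc n) + p)^2 + 1 / (2 * real (Suc n) - p)^2
          + c / p * (1 / (2 * real (Suc n) + p) - 1 / (2 * real (Suc n) - p)))
     sums (2 * dlambda 2 - (1 + c) / p^2)"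
proof -
  have shift: "2 * real (Suc n) + p = 2 * real n + 1 + 2 * real (Suc m)"
    "2 * real (Suc n) - p = 2 * real n + 1 - 2 * real m" for n
    unfolding p_def by simp_all
  have "(\<lambda>n. 1 / (2 * real n + 1 + 2 * real (Suc m))^2) sums (dlambda 2 - S_odd 2 (Suc m))"
    and "(\<lambda>n. 1 / (2 * real n + 1 - 2 * real m)^2) sums (dlambda 2 + S_odd 2 m)"
    using dlambda_shift_up_sums[of 2 "Suc m"] dlambda_shift_down_sums[of 1 m] by simp_all
  then have up: "(\<lambda>n. 1 / (2 * real (Suc n) + p)^2) sums (dlambda 2 - S_odd 2 (Suc m))"
    and down: "(\<lambda>n. 1 / (2 * real (Suc n) - p)^2) sums (dlambda 2 + S_odd 2 m)"
    by (simp_all only: shift)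
  have "S_odd 2 (Suc m) = S_odd 2 m + 1 / p^2"
    unfolding S_odd_eq_sum_lessThan p_def by simp
  then have total: "dlambda 2 - S_odd 2 (Suc m) + (dlambda 2 + S_odd 2 m) + c / p * (- 1 / p)
      = 2 * dlambda 2 - (1 + c) / p^2"
    by (simp add: add_divide_distrib power2_eq_square)
  show ?thesis
    unfolding total[symmetric]
    by (intro sums_add up down sums_mult odd_reciprocal_difference_sums[of m, folded p_def])
qed

lemma sigma_kernel_odd_sums:
  fixes m b :: nat
  defines "p \<equiv> 2 * real m + 1"
  shows "(\<lambda>n. sigma_kernel (2 * b + 1) m (Suc n))
    sums ((\<Sum>j=1..b. real j * 2 ^ (2 * j + 1) * zeta (real (2 * b + 2 - 2 * j)) / p ^ (2 * j + 1))
          + 2 ^ (2 * b + 2) * dlambda 2 / p ^ (2 * b + 1) - real (b + 1) * 2 ^ (2 * b + 2) / p ^ (2 * b + 3))"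
proof -
  let ?N = "\<lambda>n. real (Suc n)"
  let ?Q = "\<lambda>n. 1 / (2 * ?N n + p)^2 + 1 / (2 * ?N n - p)^2
    + real (2 * b + 1) / p * (1 / (2 * ?N n + p) - 1 / (2 * ?N n - p))"
  define C where "C = 2 ^ (2 * b + 1) / p ^ (2 * b + 1)"
  have "p > 0"
    unfolding p_def by simp
  have "2 * ?N n - p \<noteq> 0" for n
  proof
    assume "2 * ?N n - p = 0"
    then have "real (2 * Suc n) = real (2 * m + 1)"
      unfolding p_def by simp
    then show False
      by (simp only: of_nat_eq_iff) presburger
  qed
  with \<open>p > 0\<close> have kernel: "sigma_kernel (2 * b + 1) m (Suc n)
      = (\<Sum>j=1..b. real j * 2 ^ (2 * j + 1) / p ^ (2 * j + 1) * (1 / ?N n ^ (2 * b + 2 - 2 * j))) + C * ?Q n" for n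
    using partial_fractions_odd_power[of "?N n" p b] unfolding sigma_kernel_def C_def p_def
    by (simp add: add_pos_pos)
  have "(\<lambda>n. sigma_kernel (2 * b + 1) m (Suc n))
    sums ((\<Sum>j=1..b. real j * 2 ^ (2 * j + 1) / p ^ (2 * j + 1) * zeta (real (2 * b + 2 - 2 * j)))
          + C * (2 * dlambda 2 - (1 + real (2 * b + 1)) / p^2))"
    unfolding kernel p_def
    by (intro sums_add sums_sum sums_mult zeta_sums odd_shift_partial_fraction_sums) auto
  moreover have "C * (2 * dlambda 2 - (1 + real (2 * b + 1)) / p^2)
      = 2 ^ (2 * b + 2) * dlambda 2 / p ^ (2 * b + 1) - real (b + 1) * 2 ^ (2 * b + 2) / p ^ (2 * b + 3)"
    using \<open>p > 0\<close> unfolding C_def by (simp add: field_simps power_add power2_eq_square power3_eq_cube)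
  moreover have "(\<Sum>j=1..b. real j * 2 ^ (2 * j + 1) / p ^ (2 * j + 1) * zeta (real (2 * b + 2 - 2 * j)))
      = (\<Sum>j=1..b. real j * 2 ^ (2 * j + 1) * zeta (real (2 * b + 2 - 2 * j)) / p ^ (2 * j + 1))"
    by simp
  ultimately show ?thesis
    by (simp only: add_diff_eq)
qed

theorem sigma_odd_two:
  assumes "1 \<le> b"
  shows "sigma (2 * b + 1) 2
    = (\<Sum>j=1..b. real j * 2 ^ (2 * j) * zeta (real (2 * b + 2 - 2 * j)) * dlambda (real (2 * j + 1)))
      + 2 ^ (2 * b + 1) * dlambda 2 * dlambda (real (2 * b + 1))
      - real (b + 1) * 2 ^ (2 * b + 1) * dlambda (real (2 * b + 3))"
proof -
  have scaled: "(\<lambda>m. c / (2 * real m + 1) ^ k) sums (c * dlambda (real k))" if "2 \<le> k" for c k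
    using sums_mult[OF dlambda_sums[OF that], of c] by simp
  define V where "V m = (\<Sum>n. sigma_kernel (2 * b + 1) m (Suc n))" for m
  have "V sums (2 * sigma (2 * b + 1) 2)"
    unfolding V_def using assms by (intro sigma_kernel_double_sums) simp
  moreover have "V sums ((\<Sum>j=1..b. real j * 2 ^ (2 * j + 1) * zeta (real (2 * b + 2 - 2 * j)) * dlambda (real (2 * j + 1)))
      + 2 ^ (2 * b + 2) * dlambda 2 * dlambda (real (2 * b + 1))
      - real (b + 1) * 2 ^ (2 * b + 2) * dlambda (real (2 * b + 3)))"
    unfolding V_def sums_unique[OF sigma_kernel_odd_sums, symmetric]
    using assms by (intro sums_diff sums_add sums_sum scaled) auto
  moreover have "(\<Sum>j=1..b. real j * 2 ^ (2 * j + 1) * zeta (real (2 * b + 2 - 2 * j)) * dlambda (real (2 * j + 1)))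
      = 2 * (\<Sum>j=1..b. real j * 2 ^ (2 * j) * zeta (real (2 * b + 2 - 2 * j)) * dlambda (real (2 * j + 1)))"
    unfolding sum_distrib_left by (intro sum.cong) auto
  ultimately show ?thesis
    using sums_unique2 by fastforce
qed

theorem mainTheorem7:
  fixes a :: nat
  assumes "a \<ge> 2"
  shows "sigma (2*a - 1) 2 =
    - real a * 2 ^ (2*a - 1) * dlambda (real (2*a + 1))
    + 2 ^ (2*a - 1) * real (2*a + 1) / 3 * dlambda 2 * dlambda (real (2*a - 1))
    + (\<Sum>j=1..a-2. real j * 2 ^ (2*j) * dlambda (real (2*j + 1)) * zeta (real (2*a - 2*j)))"
proof -
  obtain b where a: "a = b + 2"
    using assms by (metis add.commute le_Suc_ex)
  have zeta_2: "zeta 2 = 4 / 3 * dlambda 2"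
    using dlambda_eq_zeta[of 2] by simp
  have "(\<Sum>j=1..b+1. real j * 2 ^ (2 * j) * zeta (real (2 * (b + 1) + 2 - 2 * j)) * dlambda (real (2 * j + 1)))
      = (\<Sum>j=1..b. real j * 2 ^ (2 * j) * dlambda (real (2 * j + 1)) * zeta (real (2 * a - 2 * j)))
        + real (b + 1) * 2 ^ (2 * (b + 1)) * zeta 2 * dlambda (real (2 * (b + 1) + 1))"
    unfolding a by (simp add: mult_ac)
  moreover have "2 * a - 1 = 2 * (b + 1) + 1" "a - 2 = b" "2 * a + 1 = 2 * (b + 1) + 3"
    using a by simp_all
  ultimately show ?thesis
    using sigma_odd_two[of "b + 1"] unfolding zeta_2 a by (simp add: field_simps)
qed

end
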